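(* Let $X$ be a Banach space. Then $X$ has weak normal structure if and only if $X$ has the weak fixed point property for mappings which diminish the radius of invariant convex subsets, i.e. for every nontrivial weakly compact convex subset $K$ of $X$, every self-mapping $T:K\to K$ which diminishes the radius of invariant convex subsets of $K$ has a fixed point in $K$.
   Context: Nontrivial means containing more than one point. For $x\in X$ and $A\subseteq X$, $r_x(A)=\sup\{\|x-y\|:y\in A\}$ and $\delta(A)=\sup\{\|x-y\|:x,y\in A\}$. A mapping $T:K\to K$ diminishes the radius of invariant convex subsets of $K$ if for every convex $A\subseteq K$ with $T(A)\subseteq A$, $r_{Tx}(T(A))\le r_x(A)$ for every $x\in K$. $X$ has weak normal structure if every nontrivial weakly compact convex subset $K$ of $X$ has normal structure: for every closed convex $K_0\subseteq K$ with $\delta(K_0)>0$ there is $x_0\in K_0$ with $r_{x_0}(K_0)<\delta(K_0)$. *)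

theory Defs
  imports "HOL-Analysis.Analysis"
begin

definition weak_topology :: "'a::real_normed_vector topology" where
  "weak_topology = topology_generated_by
     {f -` U | f U. bounded_linear (f :: 'a \<Rightarrow> real) \<and> open U}"

definition weakly_compact :: "'a::real_normed_vector set \<Rightarrow> bool" where
  "weakly_compact K \<longleftrightarrow> compactin weak_topology K"

definition nontrivial :: "'a set \<Rightarrow> bool" where
  "nontrivial A \<longleftrightarrow> (\<exists>x\<in>A. \<exists>y\<in>A. x \<noteq> y)"

definition rad :: "'a::real_normed_vector \<Rightarrow> 'a set \<Rightarrow> real" where
  "rad x A = (SUP y\<in>A. norm (x - y))"

definition diminishes_radius :: "('a::real_normed_vector \<Rightarrow> 'a) \<Rightarrow> 'a set \<Rightarrow> bool" where
  "diminishes_radius T K \<longleftrightarrow>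
     (\<forall>A. A \<subseteq> K \<and> convex A \<and> T ` A \<subseteq> A \<longrightarrow> (\<forall>x\<in>K. rad (T x) (T ` A) \<le> rad x A))"

definition normal_structure :: "'a::real_normed_vector set \<Rightarrow> bool" where
  "normal_structure K \<longleftrightarrow>
     (\<forall>K0. K0 \<subseteq> K \<and> closed K0 \<and> convex K0 \<and> diameter K0 > 0 \<longrightarrow>
        (\<exists>x0\<in>K0. rad x0 K0 < diameter K0))"

definition weak_normal_structure :: "'a::real_normed_vector itself \<Rightarrow> bool" where
  "weak_normal_structure _ \<longleftrightarrow>
     (\<forall>K::'a set. nontrivial K \<and> weakly_compact K \<and> convex K \<longrightarrow> normal_structure K)"

definition weak_fpp_diminishing :: "'a::real_normed_vector itself \<Rightarrow> bool" where
  "weak_fpp_diminishing _ \<longleftrightarrow>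
     (\<forall>K::'a set. nontrivial K \<and> weakly_compact K \<and> convex K \<longrightarrow>
        (\<forall>T. T ` K \<subseteq> K \<and> diminishes_radius T K \<longrightarrow> (\<exists>x\<in>K. T x = x)))"

end

theory Submission
  imports Defs
begin

(*
  If X has weak normal structure and T diminishes the radius of invariant convex subsets of a
  weakly compact convex K, Zorn's lemma (chains have nonempty intersections by weak compactness)
  gives a minimal nonempty closed convex T-invariant M. Minimality forces
  M = closure (convex hull (T ` M)), hence r_(Tx)(M) = r_(Tx)(T M) <= r_x(M); so every sublevel
  set of x |-> r_x(M) is invariant, and minimality makes every point of M diametral. Normal
  structure then leaves only a singleton, whose point T fixes.

  Conversely, a closed convex K0 of diameter d > 0 all of whose points are diametral carries an
  injective sequence s such that every point of its closed convex hull H is almost at distance d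
  from arbitrarily late terms (built stage by stage, covering convex hulls of finite sets by
  compactness). The shift s n |-> s (n + 1), sending all other points to s 0, maps H into itself
  without fixed points; every invariant convex subset of H contains a tail of s, so its radius
  at each point of H is d, while radii of images never exceed d.

  Weak compactness enters through two classical facts: closed convex sets are weakly closed
  (Hahn-Banach) and weakly compact sets are bounded (uniform boundedness).
*)

definition sublinear :: "('a::real_vector \<Rightarrow> real) \<Rightarrow> bool" where
  "sublinear q \<longleftrightarrow> (\<forall>x y. q (x + y) \<le> q x + q y) \<and> (\<forall>c>0. \<forall>x. q (c *\<^sub>R x) = c * q x)"

lemma sublinear_add_le: "sublinear q \<Longrightarrow> q (x + y) \<le> q x + q y"
  unfolding sublinear_def by blast

lemma sublinear_scaleR: "sublinear q \<Longrightarrow> c > 0 \<Longrightarrow> q (c *\<^sub>R x) = c * q x"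
  unfolding sublinear_def by blast

lemma sublinear_zero: "sublinear q \<Longrightarrow> q 0 = 0"
  using sublinear_scaleR[of q 2 0] by simp

lemma sublinear_neg_le: "sublinear q \<Longrightarrow> - q (- x) \<le> q x"
  using sublinear_add_le[of q x "- x"] sublinear_zero[of q] by simp

lemma sublinearI:
  assumes "\<And>x y. q (x + y) \<le> q x + q y"
    and "\<And>c x. c > 0 \<Longrightarrow> q (c *\<^sub>R x) \<le> c * q x"
  shows "sublinear q"
  unfolding sublinear_def
proof (intro conjI allI impI)
  fix c :: real and x assume c: "c > 0"
  have "q (inverse c *\<^sub>R (c *\<^sub>R x)) \<le> inverse c * q (c *\<^sub>R x)"
    by (rule assms(2)) (use c in simp)
  then have "c * q x \<le> q (c *\<^sub>R x)" using c by (simp add: field_simps)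
  then show "q (c *\<^sub>R x) = c * q x" using assms(2)[OF c, of x] by linarith
qed (use assms(1) in blast)

lemma sublinear_INF:
  fixes g :: "'i \<Rightarrow> 'a::real_vector \<Rightarrow> real"
  assumes "I \<noteq> {}" and bdd: "\<And>x. bdd_below ((\<lambda>i. g i x) ` I)"
    and add: "\<And>x y i j. i \<in> I \<Longrightarrow> j \<in> I \<Longrightarrow> \<exists>k\<in>I. g k (x + y) \<le> g i x + g j y"
    and scale: "\<And>c x i. c > 0 \<Longrightarrow> i \<in> I \<Longrightarrow> \<exists>j\<in>I. g j (c *\<^sub>R x) \<le> c * g i x"
  shows "sublinear (\<lambda>x. INF i\<in>I. g i x)" (is "sublinear ?p")
proof -
  have p_le: "?p x \<le> g i x" if "i \<in> I" for i x
    by (rule cINF_lower[OF bdd that])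
  have p_ge: "m \<le> ?p x" if "\<And>i. i \<in> I \<Longrightarrow> m \<le> g i x" for m x
    by (rule cINF_greatest[OF \<open>I \<noteq> {}\<close> that])
  show ?thesis
  proof (rule sublinearI)
    fix x y
    have "?p (x + y) - g j y \<le> ?p x" if "j \<in> I" for j
    proof (rule p_ge)
      fix i assume "i \<in> I"
      then obtain k where "k \<in> I" "g k (x + y) \<le> g i x + g j y" using add \<open>j \<in> I\<close> by blast
      then show "?p (x + y) - g j y \<le> g i x" using p_le[of k "x + y"] by linarith
    qed
    then have "?p (x + y) - ?p x \<le> ?p y" by (intro p_ge) (simp add: algebra_simps)
    then show "?p (x + y) \<le> ?p x + ?p y" by simp
  next
    fix c :: real and x assume "c > 0"
    have "?p (c *\<^sub>R x) / c \<le> ?p x"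
    proof (rule p_ge)
      fix i assume "i \<in> I"
      then obtain j where "j \<in> I" "g j (c *\<^sub>R x) \<le> c * g i x" using scale \<open>c > 0\<close> by blast
      then show "?p (c *\<^sub>R x) / c \<le> g i x"
        using p_le[of j "c *\<^sub>R x"] \<open>c > 0\<close> by (simp add: divide_simps mult.commute)
    qed
    then show "?p (c *\<^sub>R x) \<le> c * ?p x" using \<open>c > 0\<close> by (simp add: divide_simps mult.commute)
  qed
qed

lemma sublinear_INF_direction:
  fixes b :: "'a::real_vector"
  assumes q: "sublinear q"
  defines "r \<equiv> \<lambda>x. INF t\<in>{0::real..}. q (x + t *\<^sub>R b) - t * q b"
  shows "sublinear r" and "r \<le> q" and "r a \<le> q (a + b) - q b"
proof -
  have bdd: "bdd_below ((\<lambda>t. q (x + t *\<^sub>R b) - t * q b) ` {0..})" for x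
  proof (rule bdd_belowI2[where m="- q (- x)"])
    fix t :: real assume "t \<in> {0..}"
    then have "q (t *\<^sub>R b) = t * q b"
      using sublinear_scaleR[OF q] sublinear_zero[OF q] by (cases "t = 0") auto
    moreover have "q (t *\<^sub>R b) \<le> q (x + t *\<^sub>R b) + q (- x)"
      using sublinear_add_le[OF q, of "x + t *\<^sub>R b" "- x"] by simp
    ultimately show "- q (- x) \<le> q (x + t *\<^sub>R b) - t * q b" by simp
  qed
  show "sublinear r"
    unfolding r_def
  proof (rule sublinear_INF[OF _ bdd])
    fix x y and t1 t2 :: real assume "t1 \<in> {0..}" "t2 \<in> {0..}"
    have "q ((x + t1 *\<^sub>R b) + (y + t2 *\<^sub>R b)) \<le> q (x + t1 *\<^sub>R b) + q (y + t2 *\<^sub>R b)"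
      by (rule sublinear_add_le[OF q])
    then have "q (x + y + (t1 + t2) *\<^sub>R b) - (t1 + t2) * q b
        \<le> (q (x + t1 *\<^sub>R b) - t1 * q b) + (q (y + t2 *\<^sub>R b) - t2 * q b)"
      by (simp add: algebra_simps)
    then show "\<exists>t\<in>{0..}. q (x + y + t *\<^sub>R b) - t * q b
        \<le> (q (x + t1 *\<^sub>R b) - t1 * q b) + (q (y + t2 *\<^sub>R b) - t2 * q b)"
      using \<open>t1 \<in> {0..}\<close> \<open>t2 \<in> {0..}\<close> by (intro bexI[of _ "t1 + t2"]) auto
  next
    fix c t :: real and x assume "c > 0" "t \<in> {0..}"
    have "q (c *\<^sub>R x + (c * t) *\<^sub>R b) - (c * t) * q b = c * (q (x + t *\<^sub>R b) - t * q b)"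
      using sublinear_scaleR[OF q \<open>c > 0\<close>, of "x + t *\<^sub>R b"] by (simp add: algebra_simps)
    then show "\<exists>t'\<in>{0..}. q (c *\<^sub>R x + t' *\<^sub>R b) - t' * q b \<le> c * (q (x + t *\<^sub>R b) - t * q b)"
      using \<open>c > 0\<close> \<open>t \<in> {0..}\<close> by (intro bexI[of _ "c * t"]) auto
  qed simp
  have r_le: "r x \<le> q (x + t *\<^sub>R b) - t * q b" if "t \<ge> 0" for x t
    unfolding r_def by (rule cINF_lower[OF bdd]) (use that in auto)
  show "r \<le> q" using r_le[where t=0] by (simp add: le_fun_def)
  have "r a \<le> q (a + 1 *\<^sub>R b) - 1 * q b" by (rule r_le) simp
  then show "r a \<le> q (a + b) - q b" by simp
qed

lemma minimal_sublinear_imp_linear: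
  fixes q :: "'a::real_vector \<Rightarrow> real"
  assumes q: "sublinear q"
    and minimal: "\<And>r. sublinear r \<Longrightarrow> r \<le> q \<Longrightarrow> r = q"
  shows "linear q"
proof -
  have add: "q (a + b) = q a + q b" for a b
  proof -
    let ?r = "\<lambda>x. INF t\<in>{0::real..}. q (x + t *\<^sub>R b) - t * q b"
    have "?r = q" by (intro minimal sublinear_INF_direction[OF q])
    then have "q a \<le> q (a + b) - q b"
      using fun_cong[OF \<open>?r = q\<close>, of a] sublinear_INF_direction(3)[OF q, of a b] by linarith
    then show ?thesis using sublinear_add_le[OF q, of a b] by simp
  qed
  have neg: "q (- a) = - q a" for a
    using add[of a "- a"] sublinear_zero[OF q] by simp
  have "q (c *\<^sub>R x) = c * q x" for c x
  proof -
    consider "c > 0" | "c = 0" | "c < 0" by linarith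
    then show ?thesis
    proof cases
      case 3
      then have "q ((- c) *\<^sub>R (- x)) = (- c) * q (- x)" by (intro sublinear_scaleR[OF q]) simp
      then show ?thesis using neg[of x] by simp
    qed (use sublinear_scaleR[OF q] sublinear_zero[OF q] in auto)
  qed
  then show ?thesis by (intro linearI) (simp_all add: add)
qed

lemma sublinear_INF_chain:
  fixes C :: "('a::real_vector \<Rightarrow> real) set"
  assumes "C \<noteq> {}" and sub: "\<And>q. q \<in> C \<Longrightarrow> sublinear q \<and> q \<le> p"
    and chain: "\<And>q q'. q \<in> C \<Longrightarrow> q' \<in> C \<Longrightarrow> q \<le> q' \<or> q' \<le> q"
  shows "sublinear (\<lambda>x. INF q\<in>C. q x)" and "q \<in> C \<Longrightarrow> (\<lambda>x. INF q\<in>C. q x) \<le> q"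
proof -
  have bdd: "bdd_below ((\<lambda>q. q x) ` C)" for x
  proof (rule bdd_belowI2[where m="- p (- x)"])
    fix q assume "q \<in> C"
    then have "q (- x) \<le> p (- x)" "- q (- x) \<le> q x"
      using sub sublinear_neg_le[of q x] by (auto simp: le_fun_def)
    then show "- p (- x) \<le> q x" by linarith
  qed
  show "sublinear (\<lambda>x. INF q\<in>C. q x)"
  proof (rule sublinear_INF[OF assms(1) bdd])
    fix x y q1 q2 assume "q1 \<in> C" "q2 \<in> C"
    then obtain q where q: "q \<in> C" "q \<le> q1" "q \<le> q2" using chain by blast
    have "q (x + y) \<le> q x + q y" using sub[OF q(1)] by (simp add: sublinear_add_le)
    also have "\<dots> \<le> q1 x + q2 y" using q(2,3) by (simp add: add_mono le_fun_def)
    finally show "\<exists>q\<in>C. q (x + y) \<le> q1 x + q2 y" using q(1) by blast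
  next
    fix c :: real and x q assume "c > 0" "q \<in> C"
    then have "q (c *\<^sub>R x) = c * q x" using sub sublinear_scaleR by blast
    then show "\<exists>q'\<in>C. q' (c *\<^sub>R x) \<le> c * q x" using \<open>q \<in> C\<close> by (intro bexI[of _ q]) auto
  qed
  show "q \<in> C \<Longrightarrow> (\<lambda>x. INF q\<in>C. q x) \<le> q" using cINF_lower[OF bdd] by (simp add: le_fun_def)
qed

theorem sublinear_dominates_linear:
  fixes p :: "'a::real_vector \<Rightarrow> real"
  assumes p: "sublinear p"
  obtains f where "linear f" "f \<le> p"
proof -
  define A where "A = {q. sublinear q \<and> q \<le> p}"
  have po: "partial_order_on A (relation_of (\<ge>) A)"
    by (rule partial_order_on_relation_ofI) auto
  have "\<exists>u\<in>A. \<forall>q\<in>C. u \<le> q" if "C \<in> Chains (relation_of (\<ge>) A)" for C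
  proof (cases "C = {}")
    case True
    then show ?thesis using p unfolding A_def by auto
  next
    case False
    have sub: "\<And>q. q \<in> C \<Longrightarrow> sublinear q \<and> q \<le> p"
      and chain: "\<And>q q'. q \<in> C \<Longrightarrow> q' \<in> C \<Longrightarrow> q \<le> q' \<or> q' \<le> q"
      using that unfolding Chains_def relation_of_def A_def by blast+
    note u = sublinear_INF_chain[OF False sub chain]
    obtain q where "q \<in> C" using False by blast
    then have "(\<lambda>x. INF q\<in>C. q x) \<le> p" using u(2) sub by (meson order_trans)
    then show ?thesis using u unfolding A_def by blast
  qed
  then obtain m where "m \<in> A" and minimal: "\<And>q. q \<in> A \<Longrightarrow> q \<le> m \<Longrightarrow> q = m"
    using predicate_Zorn[OF po] by blast
  then have "sublinear m" "m \<le> p" unfolding A_def by auto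
  moreover have "linear m"
    by (rule minimal_sublinear_imp_linear[OF \<open>sublinear m\<close>])
      (use minimal \<open>m \<le> p\<close> in \<open>auto simp: A_def intro: order_trans\<close>)
  ultimately show ?thesis using that by blast
qed

lemma convex_cone_add:
  fixes W :: "'a::real_vector set"
  assumes "convex W" "w1 \<in> W" "w2 \<in> W" "t1 \<ge> 0" "t2 \<ge> 0"
  obtains w where "w \<in> W" "(t1 + t2) *\<^sub>R w = t1 *\<^sub>R w1 + t2 *\<^sub>R w2"
proof (cases "t1 + t2 = 0")
  case True
  then have "t1 = 0" "t2 = 0" using assms(4,5) by auto
  then show ?thesis using that assms(2) by auto
next
  case False
  then have pos: "t1 + t2 > 0" using assms(4,5) by simp
  let ?w = "(t1 / (t1 + t2)) *\<^sub>R w1 + (t2 / (t1 + t2)) *\<^sub>R w2"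
  have "?w \<in> W"
    by (rule convexD[OF assms(1-3)]) (use pos assms(4,5) in \<open>auto simp: divide_simps\<close>)
  moreover have "(t1 + t2) *\<^sub>R ?w = t1 *\<^sub>R w1 + t2 *\<^sub>R w2"
    using pos by (simp add: scaleR_add_right)
  ultimately show ?thesis by (rule that)
qed

text \<open>The infimal convolution of the norm with the cone over \<open>W\<close>: linear functionals below it
  have norm at most 1 and separate \<open>W\<close> from \<open>0\<close> by \<open>d\<close>.\<close>
lemma sublinear_INF_cone:
  fixes W :: "'a::real_normed_vector set"
  assumes W: "convex W" "W \<noteq> {}" and d: "\<And>w. w \<in> W \<Longrightarrow> d \<le> norm w"
  defines "p \<equiv> \<lambda>v. INF (t, w)\<in>{0::real..} \<times> W. norm (v - t *\<^sub>R w) - t * d"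
  shows "sublinear p" and "p v \<le> norm v" and "w \<in> W \<Longrightarrow> p w \<le> - d"
proof -
  have bdd: "bdd_below ((\<lambda>(t, w). norm (v - t *\<^sub>R w) - t * d) ` ({0..} \<times> W))" for v
  proof (rule bdd_belowI2[where m="- norm v"])
    fix tw assume "tw \<in> {0::real..} \<times> W"
    then obtain t w where tw: "tw = (t, w)" "t \<ge> 0" "w \<in> W" by auto
    then have "t * d \<le> norm (t *\<^sub>R w)" using d by (simp add: mult_left_mono)
    also have "\<dots> \<le> norm (v - t *\<^sub>R w) + norm v"
      by (metis add.commute norm_minus_commute norm_triangle_sub)
    finally show "- norm v \<le> (case tw of (t, w) \<Rightarrow> norm (v - t *\<^sub>R w) - t * d)"
      using tw by simp
  qed
  show "sublinear p"
    unfolding p_def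
  proof (rule sublinear_INF[OF _ bdd], goal_cases)
    case (2 x y i j)
    then obtain t1 w1 t2 w2 where ij: "i = (t1, w1)" "j = (t2, w2)" "t1 \<ge> 0" "w1 \<in> W" "t2 \<ge> 0" "w2 \<in> W"
      by auto
    then obtain w where w: "w \<in> W" "(t1 + t2) *\<^sub>R w = t1 *\<^sub>R w1 + t2 *\<^sub>R w2"
      using convex_cone_add[OF W(1)] by blast
    have "norm (x + y - (t1 + t2) *\<^sub>R w) \<le> norm (x - t1 *\<^sub>R w1) + norm (y - t2 *\<^sub>R w2)"
      using norm_triangle_ineq[of "x - t1 *\<^sub>R w1" "y - t2 *\<^sub>R w2"] w(2) by (simp add: algebra_simps)
    then show ?case using ij w(1) by (intro bexI[of _ "(t1 + t2, w)"]) (auto simp: algebra_simps)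
  next
    case (3 c x i)
    then obtain t w where i: "i = (t, w)" "t \<ge> 0" "w \<in> W" by auto
    have "norm (c *\<^sub>R x - (c * t) *\<^sub>R w) - (c * t) * d = c * (norm (x - t *\<^sub>R w) - t * d)"
      using \<open>c > 0\<close> norm_scaleR[of c "x - t *\<^sub>R w"] by (simp add: scaleR_diff_right algebra_simps)
    then show ?case using \<open>c > 0\<close> i by (intro bexI[of _ "(c * t, w)"]) auto
  qed (use W(2) in auto)
  have p_le: "p v \<le> norm (v - t *\<^sub>R w) - t * d" if "t \<ge> 0" "w \<in> W" for v t w
    unfolding p_def using cINF_lower[OF bdd, of "(t, w)" v] that by simp
  obtain w0 where "w0 \<in> W" using W(2) by blast
  then show "p v \<le> norm v" using p_le[of 0 w0 v] by simp
  show "w \<in> W \<Longrightarrow> p w \<le> - d" using p_le[of 1 w w] by simp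
qed

lemma convex_separation_distance:
  fixes C :: "'a::real_normed_vector set"
  assumes "convex C" "C \<noteq> {}" and d: "\<And>c. c \<in> C \<Longrightarrow> d \<le> norm (c - z)"
  obtains f :: "'a \<Rightarrow> real"
    where "bounded_linear f" "\<And>v. \<bar>f v\<bar> \<le> norm v" "\<And>c. c \<in> C \<Longrightarrow> f c + d \<le> f z"
proof -
  let ?W = "(\<lambda>c. c - z) ` C"
  have W: "convex ?W" "?W \<noteq> {}" "\<And>w. w \<in> ?W \<Longrightarrow> d \<le> norm w"
    using assms by (auto intro: convex_translation_subtract)
  note p = sublinear_INF_cone[OF W]
  obtain f where f: "linear f" "f \<le> (\<lambda>v. INF (t, w)\<in>{0::real..} \<times> ?W. norm (v - t *\<^sub>R w) - t * d)"
    using sublinear_dominates_linear[OF p(1)] by blast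
  have f_norm: "\<bar>f v\<bar> \<le> norm v" for v
    using order_trans[OF le_funD[OF f(2)] p(2), of v] order_trans[OF le_funD[OF f(2)] p(2), of "- v"]
      linear_neg[OF f(1), of v] by (simp add: abs_le_iff)
  have "bounded_linear f"
    by (rule bounded_linear_intro[where K=1]) (use f(1) f_norm in \<open>auto simp: linear_add linear_scale\<close>)
  moreover have "f c + d \<le> f z" if "c \<in> C" for c
    using order_trans[OF le_funD[OF f(2)] p(3), of "c - z"] that linear_diff[OF f(1), of c z] by simp
  ultimately show ?thesis using that f_norm by blast
qed

lemma separate_point_closed_convex:
  fixes C :: "'a::real_normed_vector set"
  assumes "convex C" "closed C" "z \<notin> C"
  obtains f :: "'a \<Rightarrow> real" and d where "bounded_linear f" "d > 0" "\<And>c. c \<in> C \<Longrightarrow> f c + d \<le> f z"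
proof (cases "C = {}")
  case True
  then show ?thesis using that[OF bounded_linear_zero zero_less_one] by blast
next
  case False
  have "infdist z C > 0"
    using assms False in_closed_iff_infdist_zero infdist_nonneg by (metis less_eq_real_def)
  moreover have "infdist z C \<le> norm (c - z)" if "c \<in> C" for c
    using infdist_le[OF that, of z] by (simp add: dist_norm norm_minus_commute)
  ultimately show ?thesis
    using convex_separation_distance[OF assms(1) False] that by metis
qed

lemma exists_norming_functional:
  fixes x :: "'a::real_normed_vector"
  obtains f :: "'a \<Rightarrow> real" where "bounded_linear f" "\<And>v. \<bar>f v\<bar> \<le> norm v" "f x = norm x"
proof -
  obtain f :: "'a \<Rightarrow> real" where f: "bounded_linear f" "\<And>v. \<bar>f v\<bar> \<le> norm v" "f 0 + norm x \<le> f x"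
    using convex_separation_distance[of "{0}" "norm x" x] by auto
  have "f x = norm x"
    using f(2)[of x] f(3) linear_0[OF bounded_linear.linear[OF f(1)]] by linarith
  then show ?thesis using f that by blast
qed

lemma topspace_weak_topology [simp]: "topspace (weak_topology :: 'a::real_normed_vector topology) = UNIV"
proof -
  have "(\<lambda>_::'a. 0::real) -` UNIV = UNIV" by simp
  then have "UNIV \<in> {f -` U | f U. bounded_linear (f :: 'a \<Rightarrow> real) \<and> open U}"
    using bounded_linear_zero open_UNIV by blast
  then show ?thesis unfolding weak_topology_def by auto
qed

lemma openin_weak_topology_vimage:
  fixes f :: "'a::real_normed_vector \<Rightarrow> real"
  assumes "bounded_linear f" "open U"
  shows "openin weak_topology (f -` U)"
  unfolding weak_topology_def by (rule topology_generated_by_Basis) (use assms in blast)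

lemma openin_weak_topology_imp_open:
  assumes "openin (weak_topology :: 'a::real_normed_vector topology) U"
  shows "open U"
proof -
  have "generate_topology_on {f -` U | f U. bounded_linear (f :: 'a \<Rightarrow> real) \<and> open U} U"
    using assms unfolding weak_topology_def openin_topology_generated_by_iff .
  then show ?thesis
  proof induction
    case (Basis s)
    then show ?case using continuous_open_vimage linear_continuous_at by blast
  qed auto
qed

lemma continuous_map_weak_topology:
  fixes f :: "'a::real_normed_vector \<Rightarrow> real"
  assumes "bounded_linear f"
  shows "continuous_map weak_topology euclidean f"
  unfolding continuous_map_def using openin_weak_topology_vimage[OF assms] by (auto simp: vimage_def)

lemma closedin_weak_topology_closed_convex:
  fixes C :: "'a::real_normed_vector set"
  assumes "closed C" "convex C"
  shows "closedin weak_topology C"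
proof -
  have "\<exists>V. openin weak_topology V \<and> z \<in> V \<and> V \<subseteq> - C" if "z \<notin> C" for z
  proof -
    obtain f :: "'a \<Rightarrow> real" and d where f: "bounded_linear f" "d > 0" "\<And>c. c \<in> C \<Longrightarrow> f c + d \<le> f z"
      using separate_point_closed_convex[OF assms(2,1) \<open>z \<notin> C\<close>] by blast
    have "openin weak_topology (f -` {f z - d <..})"
      by (rule openin_weak_topology_vimage[OF f(1)]) simp
    moreover have "f -` {f z - d <..} \<subseteq> - C" using f(3) by force
    ultimately show ?thesis using f(2) by auto
  qed
  then have "openin weak_topology (- C)" by (subst openin_subopen) blast
  then show ?thesis unfolding closedin_def by (simp add: Compl_eq_Diff_UNIV)
qed

lemma Hausdorff_space_weak_topology: "Hausdorff_space (weak_topology :: 'a::real_normed_vector topology)"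
  unfolding Hausdorff_space_def
proof clarify
  fix x y :: 'a assume "x \<noteq> y"
  then obtain f :: "'a \<Rightarrow> real" and d where f: "bounded_linear f" "d > 0" "f x + d \<le> f y"
    using separate_point_closed_convex[of "{x}" y] by auto
  let ?U = "f -` {..< f x + d/2}" and ?V = "f -` {f x + d/2 <..}"
  have "openin weak_topology ?U" "openin weak_topology ?V"
    by (simp_all add: openin_weak_topology_vimage[OF f(1)])
  moreover have "x \<in> ?U" "y \<in> ?V" "disjnt ?U ?V" using f(2,3) by (auto simp: disjnt_def)
  ultimately show "\<exists>U V. openin weak_topology U \<and> openin weak_topology V \<and> x \<in> U \<and> y \<in> V \<and> disjnt U V"
    by blast
qed

lemma weakly_compact_imp_closed:
  fixes K :: "'a::real_normed_vector set"
  assumes "weakly_compact K"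
  shows "closed K"
proof -
  have "closedin weak_topology K"
    using compactin_imp_closedin[OF Hausdorff_space_weak_topology] assms unfolding weakly_compact_def by blast
  then have "open (- K)"
    using openin_weak_topology_imp_open unfolding closedin_def by (simp add: Compl_eq_Diff_UNIV)
  then show ?thesis by (simp add: closed_def)
qed

lemma weakly_compact_closed_convex_subset:
  fixes K C :: "'a::real_normed_vector set"
  assumes "weakly_compact K" "C \<subseteq> K" "closed C" "convex C"
  shows "weakly_compact C"
  using closed_compactin[of weak_topology K C] assms closedin_weak_topology_closed_convex
  unfolding weakly_compact_def by blast

lemma bounded_if_functionals_bounded_on_ball:
  fixes K :: "'a::real_normed_vector set" and g0 :: "'a \<Rightarrow>\<^sub>L real"
  assumes "r > 0" and B: "\<And>g x. g \<in> ball g0 r \<Longrightarrow> x \<in> K \<Longrightarrow> \<bar>blinfun_apply g x\<bar> \<le> B"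
  shows "bounded K"
proof -
  have "norm x \<le> 4 * B / r" if x: "x \<in> K" for x
  proof -
    obtain f :: "'a \<Rightarrow> real" where f: "bounded_linear f" "\<And>v. \<bar>f v\<bar> \<le> norm v" "f x = norm x"
      using exists_norming_functional by blast
    define h where "h = (r / 2) *\<^sub>R Blinfun f"
    have h_apply: "h v = (r / 2) * f v" for v
      unfolding h_def using bounded_linear_Blinfun_apply[OF f(1)] by (simp add: blinfun.scaleR_left)
    have "norm (Blinfun f) \<le> 1"
      by (rule norm_blinfun_bound) (use f(2) in \<open>auto simp: bounded_linear_Blinfun_apply[OF f(1)]\<close>)
    then have "norm h \<le> r / 2" unfolding h_def using \<open>r > 0\<close> by simp
    then have "g0 + h \<in> ball g0 r" "g0 \<in> ball g0 r" using \<open>r > 0\<close> by (auto simp: dist_norm)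
    then have "\<bar>(g0 + h) x\<bar> \<le> B" "\<bar>g0 x\<bar> \<le> B" using B x by blast+
    then have "(r / 2) * norm x \<le> 2 * B" using h_apply f(3) \<open>r > 0\<close> by (simp add: blinfun.add_left)
    then show ?thesis using \<open>r > 0\<close> by (simp add: field_simps)
  qed
  then show ?thesis unfolding bounded_iff by blast
qed

text \<open>The uniform boundedness principle, proved by Baire category in the dual space.\<close>
lemma weakly_bounded_imp_bounded:
  fixes K :: "'a::banach set"
  assumes weakly_bounded: "\<And>f :: 'a \<Rightarrow> real. bounded_linear f \<Longrightarrow> bounded (f ` K)"
  shows "bounded K"
proof -
  define F where "F n = {g :: 'a \<Rightarrow>\<^sub>L real. \<forall>x\<in>K. \<bar>g x\<bar> \<le> real n}" for n :: nat
  have closed_F: "closed (F n)" for n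
  proof -
    have "closed {g :: 'a \<Rightarrow>\<^sub>L real. \<bar>g x\<bar> \<le> real n}" for x
      by (intro closed_Collect_le continuous_intros linear_continuous_on blinfun.bounded_linear_left)
    moreover have "F n = (\<Inter>x\<in>K. {g :: 'a \<Rightarrow>\<^sub>L real. \<bar>g x\<bar> \<le> real n})" unfolding F_def by auto
    ultimately show ?thesis by auto
  qed
  have "g \<in> \<Union>(range F)" for g
  proof -
    obtain B where "\<forall>x\<in>K. \<bar>g x\<bar> \<le> B"
      using weakly_bounded[OF blinfun.bounded_linear_right] unfolding bounded_iff by auto
    moreover obtain n :: nat where "B \<le> real n" using real_arch_simple by blast
    ultimately have "g \<in> F n" unfolding F_def by (auto intro: order_trans)
    then show ?thesis by blast
  qed
  then have cover: "\<Union>(range F) = UNIV" by blast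
  have "\<exists>n. interior (F n) \<noteq> {}"
  proof (rule ccontr)
    assume "\<nexists>n. interior (F n) \<noteq> {}"
    then have "euclidean interior_of \<Union>(range F) = {}"
      using closed_F by (intro Baire_category_alt) (auto simp: completely_metrizable_space_euclidean)
    with cover show False by simp
  qed
  then obtain n g0 where "g0 \<in> interior (F n)" by blast
  then obtain r where "r > 0" "ball g0 r \<subseteq> F n"
    using mem_interior by blast
  then show ?thesis
    by (intro bounded_if_functionals_bounded_on_ball[of r g0 _ "real n"]) (auto simp: F_def)
qed

lemma weakly_compact_imp_bounded:
  fixes K :: "'a::banach set"
  assumes "weakly_compact K"
  shows "bounded K"
proof (rule weakly_bounded_imp_bounded)
  fix f :: "'a \<Rightarrow> real" assume "bounded_linear f"
  then have "compactin euclidean (f ` K)"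
    using image_compactin continuous_map_weak_topology assms unfolding weakly_compact_def by blast
  then show "bounded (f ` K)" using compact_imp_bounded by auto
qed

lemma bdd_above_rad:
  fixes S :: "'a::real_normed_vector set"
  assumes "bounded S"
  shows "bdd_above ((\<lambda>y. norm (x - y)) ` S)"
proof -
  obtain B where B: "\<forall>y\<in>S. norm y \<le> B" using assms unfolding bounded_iff by auto
  show ?thesis
  proof (rule bdd_aboveI2[where M="norm x + B"])
    fix y assume "y \<in> S"
    then show "norm (x - y) \<le> norm x + B" using B norm_triangle_ineq4[of x y] by force
  qed
qed

lemma rad_le_iff:
  fixes S :: "'a::real_normed_vector set"
  assumes "bounded S" "S \<noteq> {}"
  shows "rad x S \<le> c \<longleftrightarrow> (\<forall>y\<in>S. norm (x - y) \<le> c)"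
  unfolding rad_def using cSUP_le_iff[OF assms(2) bdd_above_rad[OF assms(1)]] by blast

lemma less_rad_iff:
  fixes S :: "'a::real_normed_vector set"
  assumes "bounded S" "S \<noteq> {}"
  shows "c < rad x S \<longleftrightarrow> (\<exists>y\<in>S. c < norm (x - y))"
  using rad_le_iff[OF assms, of x c] by (meson not_less)

lemma norm_le_rad:
  fixes S :: "'a::real_normed_vector set"
  assumes "bounded S" "y \<in> S"
  shows "norm (x - y) \<le> rad x S"
  unfolding rad_def by (rule cSUP_upper[OF assms(2) bdd_above_rad[OF assms(1)]])

lemma rad_closure_convex_hull:
  fixes S :: "'a::real_normed_vector set"
  assumes "bounded S" "S \<noteq> {}"
  shows "rad x (closure (convex hull S)) = rad x S"
proof -
  have bounded: "bounded (closure (convex hull S))"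
    using assms(1) by (intro bounded_closure bounded_convex_hull)
  have "closure (convex hull S) \<subseteq> cball x (rad x S)"
  proof (intro closure_minimal hull_minimal subsetI)
    fix y assume "y \<in> S"
    then show "y \<in> cball x (rad x S)" using norm_le_rad[OF assms(1)] by (simp add: dist_norm)
  qed auto
  then have "rad x (closure (convex hull S)) \<le> rad x S"
    using rad_le_iff[OF bounded] assms(2) by (force simp: dist_norm)
  moreover have "S \<subseteq> closure (convex hull S)"
    using hull_subset[of S convex] closure_subset[of "convex hull S"] by blast
  then have "rad x S \<le> rad x (closure (convex hull S))"
    unfolding rad_le_iff[OF assms] using norm_le_rad[OF bounded] by blast
  ultimately show ?thesis by simp
qed

definition diametral :: "'a::real_normed_vector set \<Rightarrow> bool" where
  "diametral K \<longleftrightarrow> (\<forall>x\<in>K. diameter K \<le> rad x K)"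

lemma normal_structure_iff_no_diametral:
  "normal_structure K \<longleftrightarrow>
     (\<nexists>K0. K0 \<subseteq> K \<and> closed K0 \<and> convex K0 \<and> diameter K0 > 0 \<and> diametral K0)"
proof
  assume "normal_structure K"
  show "\<nexists>K0. K0 \<subseteq> K \<and> closed K0 \<and> convex K0 \<and> diameter K0 > 0 \<and> diametral K0"
  proof clarify
    fix K0 assume "K0 \<subseteq> K" "closed K0" "convex K0" "diameter K0 > 0" "diametral K0"
    then obtain x0 where "x0 \<in> K0" "rad x0 K0 < diameter K0"
      using \<open>normal_structure K\<close> unfolding normal_structure_def by blast
    moreover have "diameter K0 \<le> rad x0 K0"
      using \<open>diametral K0\<close> \<open>x0 \<in> K0\<close> unfolding diametral_def by blast
    ultimately show False by linarith
  qed
next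
  assume no_diametral: "\<nexists>K0. K0 \<subseteq> K \<and> closed K0 \<and> convex K0 \<and> diameter K0 > 0 \<and> diametral K0"
  show "normal_structure K"
    unfolding normal_structure_def
  proof clarify
    fix K0 assume "K0 \<subseteq> K" "closed K0" "convex K0" "diameter K0 > 0"
    then have "\<not> diametral K0" using no_diametral by blast
    then show "\<exists>x0\<in>K0. rad x0 K0 < diameter K0" unfolding diametral_def by (auto simp: not_le)
  qed
qed

definition invariant_closed_convex :: "('a::real_normed_vector \<Rightarrow> 'a) \<Rightarrow> 'a set \<Rightarrow> bool" where
  "invariant_closed_convex T M \<longleftrightarrow> M \<noteq> {} \<and> closed M \<and> convex M \<and> T ` M \<subseteq> M"

lemma invariant_closed_convex_Inter_chain:
  fixes K :: "'a::real_normed_vector set"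
  assumes K: "weakly_compact K" and "C \<noteq> {}"
    and C: "\<And>M. M \<in> C \<Longrightarrow> M \<subseteq> K \<and> invariant_closed_convex T M"
    and chain: "\<And>M M'. M \<in> C \<Longrightarrow> M' \<in> C \<Longrightarrow> M \<subseteq> M' \<or> M' \<subseteq> M"
  shows "invariant_closed_convex T (\<Inter>C)"
proof -
  have "K \<inter> \<Inter>F \<noteq> {}" if "finite F" "F \<subseteq> C" for F
  proof (cases "F = {}")
    case True
    then show ?thesis using C \<open>C \<noteq> {}\<close> unfolding invariant_closed_convex_def by blast
  next
    case False
    then have "\<Inter>F \<in> F"
      using Inter_in_chain[OF \<open>finite F\<close>, of UNIV] chain \<open>F \<subseteq> C\<close> by (auto simp: subset_chain_def)
    then show ?thesis using C \<open>F \<subseteq> C\<close> unfolding invariant_closed_convex_def by blast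
  qed
  moreover have "closedin weak_topology M" if "M \<in> C" for M
    using C[OF that] closedin_weak_topology_closed_convex unfolding invariant_closed_convex_def by blast
  moreover have "compactin weak_topology K" using K unfolding weakly_compact_def .
  ultimately have "K \<inter> \<Inter>C \<noteq> {}"
    unfolding compactin_fip by (metis (no_types, lifting))
  have inv: "closed M" "convex M" "T ` M \<subseteq> M" if "M \<in> C" for M
    using C[OF that] unfolding invariant_closed_convex_def by auto
  show ?thesis
    unfolding invariant_closed_convex_def
  proof (intro conjI)
    show "\<Inter>C \<noteq> {}" using \<open>K \<inter> \<Inter>C \<noteq> {}\<close> by blast
    show "closed (\<Inter>C)" by (rule closed_Inter) (use inv in blast)
    show "convex (\<Inter>C)" by (rule convex_Inter) (use inv in blast)
    show "T ` \<Inter>C \<subseteq> \<Inter>C" using inv(3) by blast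
  qed
qed

lemma exists_minimal_invariant_closed_convex:
  fixes K :: "'a::real_normed_vector set"
  assumes K: "weakly_compact K" "invariant_closed_convex T K"
  obtains M where "M \<subseteq> K" "invariant_closed_convex T M"
    "\<And>M'. M' \<subseteq> M \<Longrightarrow> invariant_closed_convex T M' \<Longrightarrow> M' = M"
proof -
  define A where "A = {M. M \<subseteq> K \<and> invariant_closed_convex T M}"
  have po: "partial_order_on A (relation_of (\<supseteq>) A)"
    by (rule partial_order_on_relation_ofI) auto
  have "\<exists>U\<in>A. \<forall>M\<in>C. U \<subseteq> M" if "C \<in> Chains (relation_of (\<supseteq>) A)" for C
  proof (cases "C = {}")
    case True
    then show ?thesis using K unfolding A_def by blast
  next
    case False
    have "\<And>M. M \<in> C \<Longrightarrow> M \<subseteq> K \<and> invariant_closed_convex T M"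
      and "\<And>M M'. M \<in> C \<Longrightarrow> M' \<in> C \<Longrightarrow> M \<subseteq> M' \<or> M' \<subseteq> M"
      using that unfolding Chains_def relation_of_def A_def by blast+
    then have "\<Inter>C \<in> A"
      using invariant_closed_convex_Inter_chain[OF K(1) False] False unfolding A_def by blast
    then show ?thesis by blast
  qed
  from predicate_Zorn[OF po this] obtain M where M: "M \<in> A" "\<forall>M'\<in>A. M' \<subseteq> M \<longrightarrow> M' = M"
    by blast
  show ?thesis
  proof (rule that)
    show "M \<subseteq> K" "invariant_closed_convex T M" using M(1) unfolding A_def by auto
    show "M' = M" if "M' \<subseteq> M" "invariant_closed_convex T M'" for M'
      using M that unfolding A_def by blast
  qed
qed

lemma minimal_invariant_closure_convex_hull_image:
  assumes M: "invariant_closed_convex T M"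
    and minimal: "\<And>M'. M' \<subseteq> M \<Longrightarrow> invariant_closed_convex T M' \<Longrightarrow> M' = M"
  shows "closure (convex hull (T ` M)) = M"
proof (rule minimal)
  show sub: "closure (convex hull (T ` M)) \<subseteq> M"
    using M unfolding invariant_closed_convex_def by (metis closure_minimal hull_minimal)
  then have "T ` closure (convex hull (T ` M)) \<subseteq> closure (convex hull (T ` M))"
    using closure_subset hull_subset by fastforce
  then show "invariant_closed_convex T (closure (convex hull (T ` M)))"
    using M unfolding invariant_closed_convex_def by (simp add: convex_closure)
qed

text \<open>For \<open>x0 \<in> M\<close>, the points \<open>x\<close> with \<open>rad x M \<le> rad x0 M\<close> form an invariant subset, since \<open>T\<close>
  does not increase radii on \<open>M = closure (convex hull (T ` M))\<close>; minimality makes it all of \<open>M\<close>.\<close>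
lemma minimal_invariant_diametral:
  assumes T: "diminishes_radius T K" and "bounded K" "M \<subseteq> K"
    and M: "invariant_closed_convex T M"
    and minimal: "\<And>M'. M' \<subseteq> M \<Longrightarrow> invariant_closed_convex T M' \<Longrightarrow> M' = M"
  shows "diametral M"
  unfolding diametral_def
proof
  fix x0 assume "x0 \<in> M"
  have bounded: "bounded M" "bounded (T ` M)" and "M \<noteq> {}"
    using M \<open>bounded K\<close> \<open>M \<subseteq> K\<close> bounded_subset unfolding invariant_closed_convex_def by blast+
  have rad_T: "rad (T x) M \<le> rad x M" if "x \<in> M" for x
  proof -
    have "rad (T x) M = rad (T x) (T ` M)"
      using rad_closure_convex_hull[OF bounded(2)] minimal_invariant_closure_convex_hull_image[OF M minimal]
        \<open>M \<noteq> {}\<close> by simp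
    also have "\<dots> \<le> rad x M"
      using T M \<open>M \<subseteq> K\<close> that unfolding diminishes_radius_def invariant_closed_convex_def by blast
    finally show ?thesis .
  qed
  define c where "c = rad x0 M"
  define Mc where "Mc = M \<inter> (\<Inter>y\<in>M. cball y c)"
  have Mc_eq: "Mc = {x\<in>M. rad x M \<le> c}"
    unfolding Mc_def using rad_le_iff[OF bounded(1) \<open>M \<noteq> {}\<close>] by (auto simp: dist_norm norm_minus_commute)
  have "invariant_closed_convex T Mc"
    unfolding invariant_closed_convex_def
  proof (intro conjI)
    show "Mc \<noteq> {}" using \<open>x0 \<in> M\<close> unfolding Mc_eq c_def by blast
    show "closed Mc"
      using M unfolding Mc_def invariant_closed_convex_def by (intro closed_Int closed_INT) auto
    show "convex Mc"
      using M unfolding Mc_def invariant_closed_convex_def by (intro convex_Int convex_INT) auto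
    show "T ` Mc \<subseteq> Mc"
      using M rad_T order_trans unfolding Mc_eq invariant_closed_convex_def by fastforce
  qed
  then have "Mc = M" by (rule minimal[rotated]) (simp add: Mc_def)
  then have "\<forall>x\<in>M. \<forall>y\<in>M. norm (x - y) \<le> c"
    using rad_le_iff[OF bounded(1) \<open>M \<noteq> {}\<close>] unfolding Mc_eq by blast
  then show "diameter M \<le> rad x0 M"
    unfolding c_def using \<open>M \<noteq> {}\<close> by (intro diameter_le) auto
qed

lemma weak_normal_structure_imp_fixed_point:
  fixes K :: "'a::banach set"
  assumes "weak_normal_structure TYPE('a)" "nontrivial K" "weakly_compact K" "convex K"
    and T: "T ` K \<subseteq> K" "diminishes_radius T K"
  shows "\<exists>x\<in>K. T x = x"
proof -
  have "K \<noteq> {}" using \<open>nontrivial K\<close> unfolding nontrivial_def by blast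
  then have "invariant_closed_convex T K"
    using weakly_compact_imp_closed[OF \<open>weakly_compact K\<close>] \<open>convex K\<close> T(1)
    unfolding invariant_closed_convex_def by blast
  then obtain M where M: "M \<subseteq> K" "invariant_closed_convex T M"
    and minimal: "\<And>M'. M' \<subseteq> M \<Longrightarrow> invariant_closed_convex T M' \<Longrightarrow> M' = M"
    using exists_minimal_invariant_closed_convex[OF \<open>weakly_compact K\<close>] by blast
  have bounded: "bounded K" "bounded M"
    using weakly_compact_imp_bounded[OF \<open>weakly_compact K\<close>] M(1) bounded_subset by blast+
  have "diametral M"
    by (rule minimal_invariant_diametral[OF T(2) bounded(1) M minimal])
  moreover have "normal_structure K"
    using assms unfolding weak_normal_structure_def by blast
  ultimately have "\<not> diameter M > 0"
    using M unfolding normal_structure_iff_no_diametral invariant_closed_convex_def by blast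
  then have "x = y" if "x \<in> M" "y \<in> M" for x y
  proof -
    have "dist x y \<le> 0"
      using diameter_bounded_bound[OF bounded(2) that] \<open>\<not> diameter M > 0\<close> by linarith
    then show ?thesis by simp
  qed
  moreover obtain x where "x \<in> M"
    using M(2) unfolding invariant_closed_convex_def by blast
  ultimately have "T x = x"
    using M(2) unfolding invariant_closed_convex_def by blast
  then show ?thesis using \<open>x \<in> M\<close> M(1) by blast
qed

lemma infinite_convex_Int_ball:
  fixes K :: "'a::real_normed_vector set"
  assumes "convex K" "y \<in> K" "z \<in> K" "y \<noteq> z" "r > 0"
  shows "infinite (K \<inter> ball y r)"
proof -
  define t where "t = min 1 (r / (2 * norm (z - y)))"
  define w where "w = y + t *\<^sub>R (z - y)"
  have t: "0 < t" "t \<le> 1" using assms(4,5) unfolding t_def by auto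
  have "w = (1 - t) *\<^sub>R y + t *\<^sub>R z" unfolding w_def by (simp add: algebra_simps)
  then have "w \<in> K" using convexD_alt[OF assms(1-3)] t by simp
  then have "closed_segment y w \<subseteq> K" using assms(1,2) by (simp add: closed_segment_subset)
  moreover have "closed_segment y w \<subseteq> ball y r"
  proof
    fix p assume "p \<in> closed_segment y w"
    then have "norm (p - y) \<le> norm (w - y)" by (rule segment_bound1)
    also have "norm (w - y) = t * norm (z - y)" using t unfolding w_def by simp
    also have "\<dots> \<le> r / 2" using assms(4) unfolding t_def by (simp add: min_def field_simps)
    finally show "p \<in> ball y r" using assms(5) by (simp add: dist_norm norm_minus_commute)
  qed
  moreover have "infinite (closed_segment y w)" using t assms(4) unfolding w_def by simp
  ultimately show ?thesis by (meson finite_subset le_inf_iff)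
qed

lemma diametral_far_point_avoiding:
  fixes K :: "'a::real_normed_vector set"
  assumes K: "bounded K" "convex K" "diametral K" "diameter K > 0"
    and "x \<in> K" "e > 0" "finite F"
  shows "\<exists>y\<in>K - F. diameter K - e < norm (x - y)"
proof -
  have "K \<noteq> {}" using K(4) by auto
  have "diameter K - e < rad x K" using K(3) \<open>x \<in> K\<close> \<open>e > 0\<close> unfolding diametral_def by force
  then obtain y0 where y0: "y0 \<in> K" "diameter K - e < norm (x - y0)"
    using less_rad_iff[OF K(1) \<open>K \<noteq> {}\<close>] by blast
  have "K \<noteq> {y0}" using K(4) by auto
  then obtain z where "z \<in> K" "z \<noteq> y0" using y0(1) by blast
  define g where "g = norm (x - y0) - (diameter K - e)"
  have "infinite (K \<inter> ball y0 g)"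
    using infinite_convex_Int_ball[OF K(2) y0(1) \<open>z \<in> K\<close>] \<open>z \<noteq> y0\<close> y0(2) unfolding g_def by auto
  then obtain y where y: "y \<in> K \<inter> ball y0 g" "y \<notin> F"
    using \<open>finite F\<close> by (meson finite_subset subsetI)
  have "norm (x - y0) \<le> norm (x - y) + dist y0 y"
    using norm_triangle_ineq[of "x - y" "y - y0"] by (simp add: dist_norm norm_minus_commute)
  then have "diameter K - e < norm (x - y)" using y(1) unfolding g_def by simp
  then show ?thesis using y by blast
qed

lemma diametral_far_finite_extension:
  fixes K :: "'a::real_normed_vector set"
  assumes K: "bounded K" "convex K" "diametral K" "diameter K > 0"
    and F: "finite F" "F \<subseteq> K" and "e > 0"
  obtains Y where "finite Y" "Y \<subseteq> K - F" "\<And>x. x \<in> convex hull F \<Longrightarrow> \<exists>y\<in>Y. diameter K - e < norm (x - y)"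
proof -
  let ?U = "\<lambda>y. {x. diameter K - e < norm (x - y)}"
  have open_U: "open (?U y)" for y by (intro open_Collect_less continuous_intros)
  have cover: "convex hull F \<subseteq> (\<Union>y\<in>K - F. ?U y)"
  proof
    fix x assume "x \<in> convex hull F"
    then have "x \<in> K" using hull_minimal[of F K convex, OF F(2) K(2)] by blast
    then show "x \<in> (\<Union>y\<in>K - F. ?U y)"
      using diametral_far_point_avoiding[OF K _ \<open>e > 0\<close> F(1)] by blast
  qed
  obtain Y where "Y \<subseteq> K - F" "finite Y" "convex hull F \<subseteq> (\<Union>y\<in>Y. ?U y)"
    using compactE_image[OF finite_imp_compact_convex_hull[OF F(1)] open_U cover] by blast
  then show ?thesis by (intro that[of Y]) auto
qed

lemma diametral_exists_far_chain:
  fixes K :: "'a::real_normed_vector set"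
  assumes K: "bounded K" "convex K" "diametral K" "diameter K > 0"
  obtains G :: "nat \<Rightarrow> 'a set"
  where "\<And>n. finite (G n)" "\<And>n. G n \<subseteq> K" "\<And>n. G n \<subset> G (Suc n)"
    "\<And>n x. x \<in> convex hull G n \<Longrightarrow> \<exists>y\<in>G (Suc n) - G n. diameter K - inverse (Suc n) < norm (x - y)"
proof -
  define P where "P n F \<longleftrightarrow> finite F \<and> F \<subseteq> K \<and> F \<noteq> {}" for n :: nat and F :: "'a set"
  define Q where "Q n F F' \<longleftrightarrow> F \<subset> F' \<and>
    (\<forall>x\<in>convex hull F. \<exists>y\<in>F' - F. diameter K - inverse (Suc n) < norm (x - y))"
    for n :: nat and F F' :: "'a set"
  have "\<exists>G. \<forall>n. P n (G n) \<and> Q n (G n) (G (Suc n))"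
  proof (rule dependent_nat_choice)
    obtain a where "a \<in> K" using K(4) by force
    then show "\<exists>F. P 0 F" unfolding P_def by blast
  next
    fix F n assume "P n F"
    then have F: "finite F" "F \<subseteq> K" "F \<noteq> {}" unfolding P_def by auto
    obtain Y where Y: "finite Y" "Y \<subseteq> K - F"
      and far: "\<And>x. x \<in> convex hull F \<Longrightarrow> \<exists>y\<in>Y. diameter K - inverse (Suc n) < norm (x - y)"
      using diametral_far_finite_extension[OF K F(1,2), of "inverse (Suc n)"] by auto
    have "Y \<noteq> {}" using far F(3) hull_subset[of F convex] by blast
    moreover have "F \<union> Y - F = Y" using Y(2) by blast
    ultimately have "P (Suc n) (F \<union> Y) \<and> Q n F (F \<union> Y)"
      using F Y far unfolding P_def Q_def by auto
    then show "\<exists>F'. P (Suc n) F' \<and> Q n F F'" ..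
  qed
  then obtain G where G: "\<And>n. P n (G n) \<and> Q n (G n) (G (Suc n))" by blast
  show ?thesis
    by (rule that[of G]) (use G in \<open>auto simp: P_def Q_def\<close>)
qed

lemma finite_subset_Union_mono:
  fixes G :: "nat \<Rightarrow> 'a set"
  assumes "mono G" "finite F" "F \<subseteq> \<Union>(range G)"
  obtains n where "F \<subseteq> G n"
proof -
  have "subset.chain UNIV (range G)"
    unfolding subset_chain_def using monoD[OF assms(1)] by (metis nat_le_linear rangeE subset_UNIV)
  then show ?thesis using finite_subset_Union_chain[OF assms(2,3)] that by blast
qed

lemma mem_convex_hull_finite_subset:
  assumes "x \<in> convex hull S"
  obtains F where "finite F" "F \<subseteq> S" "x \<in> convex hull F"
proof -
  obtain F u where "finite F" "F \<subseteq> S" "\<forall>v\<in>F. 0 \<le> u v" "sum u F = 1" "(\<Sum>v\<in>F. u v *\<^sub>R v) = x"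
    using assms unfolding convex_hull_explicit by blast
  then have "x \<in> convex hull F" unfolding convex_hull_explicit by blast
  then show ?thesis using that \<open>finite F\<close> \<open>F \<subseteq> S\<close> by blast
qed

lemma far_chain_Union:
  fixes G :: "nat \<Rightarrow> 'a::real_normed_vector set"
  assumes mono: "mono G"
    and far: "\<And>n x. x \<in> convex hull G n \<Longrightarrow> \<exists>y\<in>G (Suc n) - G n. \<delta> - inverse (Suc n) < norm (x - y)"
    and x: "x \<in> closure (convex hull \<Union>(range G))" and "e > 0"
    and F: "finite F" "F \<subseteq> \<Union>(range G)"
  shows "\<exists>y\<in>\<Union>(range G) - F. \<delta> - e < norm (x - y)"
proof -
  obtain x' where x': "x' \<in> convex hull \<Union>(range G)" "dist x' x < e / 2"
    using x \<open>e > 0\<close> unfolding closure_approachable by (meson half_gt_zero)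
  obtain Fx where Fx: "finite Fx" "Fx \<subseteq> \<Union>(range G)" "x' \<in> convex hull Fx"
    using mem_convex_hull_finite_subset[OF x'(1)] by blast
  obtain M where M: "Fx \<union> F \<subseteq> G M"
    using finite_subset_Union_mono[OF mono, of "Fx \<union> F"] Fx F by auto
  obtain N where N: "inverse (real (Suc N)) < e / 2"
    using reals_Archimedean \<open>e > 0\<close> by (meson half_gt_zero)
  define n where "n = max M N"
  have "G M \<subseteq> G n" unfolding n_def by (simp add: monoD[OF mono])
  then have "x' \<in> convex hull G n" using Fx(3) M hull_mono[of Fx "G n"] by blast
  then obtain y where y: "y \<in> G (Suc n) - G n" "\<delta> - inverse (Suc n) < norm (x' - y)"
    using far by blast
  have "inverse (real (Suc n)) \<le> inverse (real (Suc N))"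
    unfolding n_def by (intro le_imp_inverse_le) auto
  moreover have "norm (x' - y) \<le> norm (x - y) + dist x' x"
    using norm_triangle_ineq[of "x' - x" "x - y"] by (simp add: dist_norm)
  ultimately have "\<delta> - e < norm (x - y)" using y(2) N x'(2) by linarith
  moreover have "y \<notin> F" using y(1) M \<open>G M \<subseteq> G n\<close> by blast
  ultimately show ?thesis using y(1) by blast
qed

definition frequently_far :: "real \<Rightarrow> (nat \<Rightarrow> 'a::real_normed_vector) \<Rightarrow> bool" where
  "frequently_far \<delta> s \<longleftrightarrow>
     (\<forall>x\<in>closure (convex hull range s). \<forall>e>0. \<forall>k. \<exists>m\<ge>k. \<delta> - e < norm (x - s m))"

lemma frequently_far_mono:
  assumes "\<delta>' \<le> \<delta>" "frequently_far \<delta> s"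
  shows "frequently_far \<delta>' s"
  unfolding frequently_far_def
proof (intro ballI allI impI)
  fix x and e :: real and k assume "x \<in> closure (convex hull range s)" "e > 0"
  then obtain m where "m \<ge> k" "\<delta> - e < norm (x - s m)"
    using assms(2) unfolding frequently_far_def by blast
  then show "\<exists>m\<ge>k. \<delta>' - e < norm (x - s m)" using assms(1) by (intro exI[of _ m]) auto
qed

lemma exists_frequently_far_enumeration:
  fixes G :: "nat \<Rightarrow> 'a::real_normed_vector set"
  assumes G: "\<And>n. finite (G n)" "\<And>n. G n \<subset> G (Suc n)"
    and far: "\<And>n x. x \<in> convex hull G n \<Longrightarrow> \<exists>y\<in>G (Suc n) - G n. \<delta> - inverse (Suc n) < norm (x - y)"
  obtains s where "inj s" "range s = \<Union>(range G)" "frequently_far \<delta> s"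
proof -
  have mono: "mono G" using G(2) by (intro mono_iff_le_Suc[THEN iffD2]) auto
  define D where "D = \<Union>(range G)"
  have "infinite D"
  proof
    assume "finite D"
    then obtain n where "D \<subseteq> G n" using finite_subset_Union_mono[OF mono] unfolding D_def by blast
    moreover have "G (Suc n) \<subseteq> D" unfolding D_def by blast
    ultimately show False using G(2)[of n] by blast
  qed
  moreover have "countable D" unfolding D_def by (rule countable_UN) (simp_all add: countable_finite G(1))
  ultimately have "bij_betw (from_nat_into D) UNIV D" by (rule bij_betw_from_nat_into[rotated])
  then have inj: "inj (from_nat_into D)" and range_D: "range (from_nat_into D) = D"
    by (simp_all add: bij_betw_def)
  have "frequently_far \<delta> (from_nat_into D)"
    unfolding frequently_far_def
  proof (intro ballI allI impI)
    fix x and e :: real and k assume x: "x \<in> closure (convex hull range (from_nat_into D))" and "e > 0"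
    have x_G: "x \<in> closure (convex hull \<Union>(range G))" using x range_D unfolding D_def by simp
    have "from_nat_into D ` {..<k} \<subseteq> \<Union>(range G)" using range_D unfolding D_def by blast
    then have "\<exists>y\<in>\<Union>(range G) - from_nat_into D ` {..<k}. \<delta> - e < norm (x - y)"
      by (intro far_chain_Union[OF mono far x_G \<open>e > 0\<close>]) auto
    then obtain y where y: "y \<in> D - from_nat_into D ` {..<k}" "\<delta> - e < norm (x - y)"
      unfolding D_def by blast
    have "y \<in> range (from_nat_into D)" using y(1) range_D by blast
    then obtain m where m: "y = from_nat_into D m" by blast
    have "k \<le> m"
    proof (rule ccontr)
      assume "\<not> k \<le> m"
      then have "y \<in> from_nat_into D ` {..<k}" using m by auto
      then show False using y(1) by blast
    qed
    then show "\<exists>m\<ge>k. \<delta> - e < norm (x - from_nat_into D m)" using y(2) m by blast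
  qed
  then show ?thesis using that inj range_D unfolding D_def by blast
qed

lemma diametral_exists_far_sequence:
  fixes K :: "'a::real_normed_vector set"
  assumes K: "bounded K" "convex K" "diametral K" "diameter K > 0"
  obtains s :: "nat \<Rightarrow> 'a" where "inj s" "range s \<subseteq> K" "frequently_far (diameter K) s"
proof -
  obtain G where G: "\<And>n. finite (G n)" "\<And>n. G n \<subseteq> K" "\<And>n. G n \<subset> G (Suc n)"
    and far: "\<And>n x. x \<in> convex hull G n \<Longrightarrow> \<exists>y\<in>G (Suc n) - G n. diameter K - inverse (Suc n) < norm (x - y)"
    using diametral_exists_far_chain[OF K] by blast
  obtain s where "inj s" "range s = \<Union>(range G)" "frequently_far (diameter K) s"
    using exists_frequently_far_enumeration[OF G(1,3) far] by blast
  then show ?thesis using that G(2) by blast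
qed

definition shift_along :: "(nat \<Rightarrow> 'a) \<Rightarrow> 'a \<Rightarrow> 'a" where
  "shift_along s x = (if x \<in> range s then s (Suc (inv s x)) else s 0)"

lemma shift_along_apply [simp]: "inj s \<Longrightarrow> shift_along s (s n) = s (Suc n)"
  unfolding shift_along_def by simp

lemma shift_along_in_range: "shift_along s x \<in> range s"
  unfolding shift_along_def by simp

lemma shift_along_no_fixed_point:
  assumes "inj s"
  shows "shift_along s x \<noteq> x"
proof (cases "x \<in> range s")
  case True
  then obtain n where "x = s n" by blast
  then show ?thesis using assms by (simp add: inj_eq)
next
  case False
  then show ?thesis using shift_along_in_range[of s x] by auto
qed

lemma shift_along_invariant_contains_tail:
  assumes "inj s" "A \<noteq> {}" "shift_along s ` A \<subseteq> A"
  obtains k where "\<And>m. k \<le> m \<Longrightarrow> s m \<in> A"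
proof -
  obtain a where "a \<in> A" using assms(2) by blast
  obtain k where k: "shift_along s a = s k" using shift_along_in_range[of s a] by auto
  have "s m \<in> A" if "k \<le> m" for m
    using that
  proof (induction m rule: dec_induct)
    case base
    have "shift_along s a \<in> A" using assms(3) \<open>a \<in> A\<close> by blast
    then show ?case using k by simp
  next
    case (step m)
    then have "shift_along s (s m) \<in> A" using assms(3) by blast
    then show ?case using shift_along_apply[OF assms(1)] by simp
  qed
  then show ?thesis by (rule that)
qed

lemma shift_along_diminishes_radius:
  fixes s :: "nat \<Rightarrow> 'a::real_normed_vector"
  assumes "inj s" "bounded (range s)" and far: "frequently_far (diameter (range s)) s"
  shows "diminishes_radius (shift_along s) (closure (convex hull range s))"
  unfolding diminishes_radius_def
proof (intro allI impI ballI)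
  let ?K = "closure (convex hull range s)" and ?T = "shift_along s"
  fix A x assume A: "A \<subseteq> ?K \<and> convex A \<and> ?T ` A \<subseteq> A" and x: "x \<in> ?K"
  show "rad (?T x) (?T ` A) \<le> rad x A"
  proof (cases "A = {}")
    case True
    then show ?thesis by (simp add: rad_def) \<comment> \<open>both sides are the junk value \<open>Sup {}\<close>\<close>
  next
    case False
    have "bounded ?K" using assms(2) by (intro bounded_closure bounded_convex_hull)
    then have "bounded A" using A bounded_subset by blast
    have "?T ` A \<subseteq> range s" by (rule image_subsetI) (rule shift_along_in_range)
    then have "bounded (?T ` A)" using assms(2) bounded_subset by blast
    have "norm (?T x - y) \<le> diameter (range s)" if "y \<in> ?T ` A" for y
      using diameter_bounded_bound[OF assms(2) shift_along_in_range] that \<open>?T ` A \<subseteq> range s\<close>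
      by (auto simp: dist_norm)
    then have "rad (?T x) (?T ` A) \<le> diameter (range s)"
      using rad_le_iff[OF \<open>bounded (?T ` A)\<close>] False by blast
    moreover have "diameter (range s) \<le> rad x A"
    proof (rule field_le_epsilon)
      fix e :: real assume "e > 0"
      obtain k where tail: "\<And>m. k \<le> m \<Longrightarrow> s m \<in> A"
        using shift_along_invariant_contains_tail[OF assms(1) False] A by blast
      obtain m where "k \<le> m" "diameter (range s) - e < norm (x - s m)"
        using far x \<open>e > 0\<close> unfolding frequently_far_def by blast
      moreover have "norm (x - s m) \<le> rad x A"
        using norm_le_rad[OF \<open>bounded A\<close> tail[OF \<open>k \<le> m\<close>]] .
      ultimately show "diameter (range s) \<le> rad x A + e" by linarith
    qed
    ultimately show ?thesis by linarith
  qed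
qed

lemma diametral_imp_fixed_point_free_map:
  fixes K :: "'a::banach set"
  assumes K: "weakly_compact K" "convex K" "diametral K" "diameter K > 0"
  obtains K' :: "'a set" and T where "nontrivial K'" "weakly_compact K'" "convex K'" "T ` K' \<subseteq> K'"
    "diminishes_radius T K'" "\<And>x. x \<in> K' \<Longrightarrow> T x \<noteq> x"
proof -
  have "bounded K" using weakly_compact_imp_bounded[OF K(1)] .
  then obtain s :: "nat \<Rightarrow> 'a" where s: "inj s" "range s \<subseteq> K"
    and far: "frequently_far (diameter K) s"
    using diametral_exists_far_sequence[OF _ K(2-4)] by blast
  let ?K' = "closure (convex hull range s)"
  have "bounded (range s)" using \<open>bounded K\<close> s(2) bounded_subset by blast
  have "frequently_far (diameter (range s)) s"
    using frequently_far_mono[OF diameter_subset[OF s(2) \<open>bounded K\<close>] far] .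
  then have dim: "diminishes_radius (shift_along s) ?K'"
    by (rule shift_along_diminishes_radius[OF s(1) \<open>bounded (range s)\<close>])
  have "?K' \<subseteq> K"
    using s(2) K(2) weakly_compact_imp_closed[OF K(1)] by (intro closure_minimal hull_minimal)
  then have weakly_compact: "weakly_compact ?K'"
    by (rule weakly_compact_closed_convex_subset[OF K(1)]) (simp_all add: convex_closure)
  have range_s: "range s \<subseteq> ?K'"
    using hull_subset[of "range s" convex] closure_subset[of "convex hull range s"] by blast
  then have "s 0 \<in> ?K'" "s 1 \<in> ?K'" by auto
  moreover have "s 0 \<noteq> s 1" using inj_eq[OF s(1), of 0 1] by simp
  ultimately have nontrivial: "nontrivial ?K'" unfolding nontrivial_def by blast
  have invariant: "shift_along s ` ?K' \<subseteq> ?K'"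
    using image_subsetI[of ?K' "shift_along s" "range s", OF shift_along_in_range] range_s by blast
  have "convex ?K'" by (simp add: convex_closure)
  from that[OF nontrivial weakly_compact this invariant dim] shift_along_no_fixed_point[OF s(1)]
  show ?thesis by blast
qed

lemma fixed_point_imp_weak_normal_structure:
  assumes fpp: "weak_fpp_diminishing TYPE('a::banach)"
  shows "weak_normal_structure TYPE('a)"
  unfolding weak_normal_structure_def normal_structure_iff_no_diametral
proof clarify
  fix K K0 :: "'a set"
  assume "weakly_compact K" "K0 \<subseteq> K" "closed K0" "convex K0" "diameter K0 > 0" "diametral K0"
  then have "weakly_compact K0" using weakly_compact_closed_convex_subset by blast
  then obtain K' and T :: "'a \<Rightarrow> 'a" where "nontrivial K'" "weakly_compact K'" "convex K'"
    "T ` K' \<subseteq> K'" "diminishes_radius T K'" "\<And>x. x \<in> K' \<Longrightarrow> T x \<noteq> x"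
    using diametral_imp_fixed_point_free_map \<open>convex K0\<close> \<open>diametral K0\<close> \<open>diameter K0 > 0\<close> by blast
  then show False using fpp unfolding weak_fpp_diminishing_def by blast
qed

theorem theorem3p2:
  "weak_normal_structure TYPE('a::banach) \<longleftrightarrow> weak_fpp_diminishing TYPE('a::banach)"
proof
  assume "weak_normal_structure TYPE('a)"
  then show "weak_fpp_diminishing TYPE('a)"
    unfolding weak_fpp_diminishing_def using weak_normal_structure_imp_fixed_point by blast
next
  assume "weak_fpp_diminishing TYPE('a)"
  then show "weak_normal_structure TYPE('a)" by (rule fixed_point_imp_weak_normal_structure)
qed

end
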